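(* Let $m$ and $n$ be non-negative integers and let $G$ be a soluble group having exactly $m$ subgroups that are not nilpotent of class at most $n$. If $d$ is the derived length of $G$, then $d \leq [\log_2(n)]+m+1$.
   Context: $[x]$ denotes the integer part of $x$. A subgroup is "not nilpotent of class at most $n$" if it is either non-nilpotent or nilpotent of class greater than $n$. *)

theory Defs
  imports "HOL-Algebra.Algebra" Complex_Main
begin

text \<open>Lower central series of a subgroup H of G (computed inside G):
  index 0 is H itself (gamma_1), index i+1 is the subgroup generated by the
  commutators [x,y] with x in term i and y in H.\<close>
fun lower_central :: "('a, 'b) monoid_scheme \<Rightarrow> 'a set \<Rightarrow> nat \<Rightarrow> 'a set" where
  "lower_central G H 0 = H"
| "lower_central G H (Suc i) =
     generate G (\<Union>x \<in> lower_central G H i. \<Union>y \<in> H.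
        { x \<otimes>\<^bsub>G\<^esub> y \<otimes>\<^bsub>G\<^esub> inv\<^bsub>G\<^esub> x \<otimes>\<^bsub>G\<^esub> inv\<^bsub>G\<^esub> y })"

definition nilpotent_class_le :: "('a, 'b) monoid_scheme \<Rightarrow> 'a set \<Rightarrow> nat \<Rightarrow> bool" where
  "nilpotent_class_le G H n \<longleftrightarrow> lower_central G H n = {\<one>\<^bsub>G\<^esub>}"

definition derived_length :: "('a, 'b) monoid_scheme \<Rightarrow> nat" where
  "derived_length G = (LEAST k. (derived G ^^ k) (carrier G) = {\<one>\<^bsub>G\<^esub>})"

end

theory Submission
  imports Defs
begin

text \<open>
  Write \<open>\<gamma>\<^sub>k H\<close> for the lower central series of a subgroup \<open>H\<close> (with \<open>\<gamma>\<^sub>1 H = H\<close>) and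
  \<open>H\<^sup>(\<^sup>k\<^sup>)\<close> for its derived series. The three subgroup lemma, proved from the Hall--Witt
  identity, gives \<open>[\<gamma>\<^sub>i H, \<gamma>\<^sub>j H] \<le> \<gamma>\<^sub>i\<^sub>+\<^sub>j H\<close>, hence \<open>H\<^sup>(\<^sup>k\<^sup>) \<le> \<gamma>\<^sub>2\<^sub>^\<^sub>k H\<close>: if \<open>H\<close> is nilpotent of
  class at most \<open>n\<close> and \<open>n < 2\<^sup>e\<close>, then \<open>H\<^sup>(\<^sup>e\<^sup>) = 1\<close>. Take \<open>e = [log\<^sub>2 n] + 1\<close> and let \<open>d\<close> be the
  derived length of \<open>G\<close>. For \<open>i + e < d\<close> the subgroup \<open>G\<^sup>(\<^sup>i\<^sup>)\<close> cannot be nilpotent of class at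
  most \<open>n\<close>, since \<open>G\<^sup>(\<^sup>i\<^sup>+\<^sup>e\<^sup>) \<noteq> 1\<close>. These \<open>d - e\<close> subgroups are pairwise distinct, because the
  derived series strictly decreases until it reaches \<open>1\<close>; hence \<open>d - e \<le> m\<close>.
\<close>

definition commutator :: "('a, 'b) monoid_scheme \<Rightarrow> 'a \<Rightarrow> 'a \<Rightarrow> 'a" where
  "commutator G x y = x \<otimes>\<^bsub>G\<^esub> y \<otimes>\<^bsub>G\<^esub> inv\<^bsub>G\<^esub> x \<otimes>\<^bsub>G\<^esub> inv\<^bsub>G\<^esub> y"

context group
begin

lemma mult_inv_cancel_left [simp]: "x \<in> carrier G \<Longrightarrow> y \<in> carrier G \<Longrightarrow> x \<otimes> (inv x \<otimes> y) = y"
  by (simp add: m_assoc [symmetric])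

lemma inv_mult_cancel_left [simp]: "x \<in> carrier G \<Longrightarrow> y \<in> carrier G \<Longrightarrow> inv x \<otimes> (x \<otimes> y) = y"
  by (simp add: m_assoc [symmetric])

lemma commutator_closed [simp]:
  "x \<in> carrier G \<Longrightarrow> y \<in> carrier G \<Longrightarrow> commutator G x y \<in> carrier G"
  by (simp add: commutator_def)

lemma commutator_one_right [simp]: "x \<in> carrier G \<Longrightarrow> commutator G x \<one> = \<one>"
  by (simp add: commutator_def)

lemma inv_commutator:
  "x \<in> carrier G \<Longrightarrow> y \<in> carrier G \<Longrightarrow> inv (commutator G x y) = commutator G y x"
  by (simp add: commutator_def m_assoc inv_mult_group)

lemma commutator_inv_right:
  "x \<in> carrier G \<Longrightarrow> y \<in> carrier G \<Longrightarrow>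
   commutator G x (inv y) = inv y \<otimes> inv (commutator G x y) \<otimes> y"
  by (simp add: commutator_def m_assoc inv_mult_group)

lemma commutator_mult_right:
  "x \<in> carrier G \<Longrightarrow> y \<in> carrier G \<Longrightarrow> z \<in> carrier G \<Longrightarrow>
   commutator G x (y \<otimes> z) = commutator G x y \<otimes> (y \<otimes> commutator G x z \<otimes> inv y)"
  by (simp add: commutator_def m_assoc inv_mult_group)

lemma conj_commutator:
  "x \<in> carrier G \<Longrightarrow> y \<in> carrier G \<Longrightarrow> g \<in> carrier G \<Longrightarrow>
   g \<otimes> commutator G x y \<otimes> inv g = commutator G (g \<otimes> x \<otimes> inv g) (g \<otimes> y \<otimes> inv g)"
  by (simp add: commutator_def m_assoc inv_mult_group)

lemma hall_witt:
  assumes "x \<in> carrier G" "y \<in> carrier G" "z \<in> carrier G"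
  shows "(inv x \<otimes> commutator G (commutator G x y) z \<otimes> x)
    \<otimes> (z \<otimes> commutator G (commutator G (inv z) (inv x)) y \<otimes> inv z)
    \<otimes> (y \<otimes> commutator G (commutator G (inv y) z) (inv x) \<otimes> inv y) = \<one>"
  using assms by (simp add: commutator_def m_assoc inv_mult_group)

lemma subgroup_conj_preimage:
  assumes K: "subgroup K G" and g: "g \<in> carrier G"
  shows "subgroup {h \<in> carrier G. g \<otimes> h \<otimes> inv g \<in> K} G"
proof (rule subgroupI)
  fix h1 h2
  assume "h1 \<in> {h \<in> carrier G. g \<otimes> h \<otimes> inv g \<in> K}" "h2 \<in> {h \<in> carrier G. g \<otimes> h \<otimes> inv g \<in> K}"
  moreover have "g \<otimes> (h1 \<otimes> h2) \<otimes> inv g = (g \<otimes> h1 \<otimes> inv g) \<otimes> (g \<otimes> h2 \<otimes> inv g)"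
    if "h1 \<in> carrier G" "h2 \<in> carrier G"
    using that g by (simp add: m_assoc)
  ultimately show "h1 \<otimes> h2 \<in> {h \<in> carrier G. g \<otimes> h \<otimes> inv g \<in> K}"
    by (simp add: subgroup.m_closed [OF K])
next
  fix h assume "h \<in> {h \<in> carrier G. g \<otimes> h \<otimes> inv g \<in> K}"
  moreover have "g \<otimes> inv h \<otimes> inv g = inv (g \<otimes> h \<otimes> inv g)" if "h \<in> carrier G"
    using that g by (simp add: m_assoc inv_mult_group)
  ultimately show "inv h \<in> {h \<in> carrier G. g \<otimes> h \<otimes> inv g \<in> K}"
    by (simp add: subgroup.m_inv_closed [OF K])
qed (use K g in \<open>auto simp: subgroup.one_closed\<close>)

lemma subgroup_commutator_preimage:
  assumes H: "subgroup H G" and N: "subgroup N G" and A: "A \<subseteq> carrier G"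
    and conj: "\<And>g x. g \<in> H \<Longrightarrow> x \<in> N \<Longrightarrow> g \<otimes> x \<otimes> inv g \<in> N"
  shows "subgroup {b \<in> H. \<forall>a \<in> A. commutator G a b \<in> N} G"
proof -
  let ?K = "{b \<in> H. \<forall>a \<in> A. commutator G a b \<in> N}"
  have HG: "H \<subseteq> carrier G" by (rule subgroup.subset [OF H])
  show ?thesis
  proof (rule subgroupI)
    show "?K \<subseteq> carrier G" using HG by blast
    show "?K \<noteq> {}"
      using A subgroup.one_closed [OF H] subgroup.one_closed [OF N] by (auto intro!: exI [of _ \<one>])
  next
    fix b assume b: "b \<in> ?K"
    have "commutator G a (inv b) \<in> N" if "a \<in> A" for a
    proof -
      have "inv b \<otimes> inv (commutator G a b) \<otimes> inv (inv b) \<in> N"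
        using b that
        by (intro conj) (auto simp: subgroup.m_inv_closed [OF H] subgroup.m_inv_closed [OF N])
      moreover have "a \<in> carrier G" "b \<in> carrier G" using b that A HG by auto
      ultimately show ?thesis by (simp add: commutator_inv_right)
    qed
    then show "inv b \<in> ?K" using b subgroup.m_inv_closed [OF H] by blast
  next
    fix b c assume b: "b \<in> ?K" and c: "c \<in> ?K"
    have "commutator G a (b \<otimes> c) \<in> N" if "a \<in> A" for a
    proof -
      have "a \<in> carrier G" "b \<in> carrier G" "c \<in> carrier G" using b c that A HG by auto
      then show ?thesis
        using b c that conj [of b "commutator G a c"]
        by (simp add: commutator_mult_right subgroup.m_closed [OF N])
    qed
    then show "b \<otimes> c \<in> ?K" using b c subgroup.m_closed [OF H] by blast
  qed
qed

lemma lower_central_Suc_eq: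
  "lower_central G H (Suc k) =
     generate G {commutator G x y | x y. x \<in> lower_central G H k \<and> y \<in> H}"
  by (simp add: commutator_def) (rule arg_cong [where f = "generate G"], blast)

declare lower_central.simps(2) [simp del]

lemma commutator_mem_lower_central_Suc:
  "x \<in> lower_central G H k \<Longrightarrow> y \<in> H \<Longrightarrow> commutator G x y \<in> lower_central G H (Suc k)"
  unfolding lower_central_Suc_eq by (rule generate.incl) blast

lemma lower_central_subset:
  assumes H: "subgroup H G" shows "lower_central G H k \<subseteq> H"
proof (induction k)
  case (Suc k)
  then have "{commutator G x y | x y. x \<in> lower_central G H k \<and> y \<in> H} \<subseteq> H"
    using H by (auto simp: commutator_def subgroup.m_closed subgroup.m_inv_closed)
  then show ?case unfolding lower_central_Suc_eq using generate_subgroup_incl H by blast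
qed simp

lemma subgroup_lower_central:
  assumes H: "subgroup H G" shows "subgroup (lower_central G H k) G"
proof (cases k)
  case (Suc k')
  have "{commutator G x y | x y. x \<in> lower_central G H k' \<and> y \<in> H} \<subseteq> carrier G"
    using lower_central_subset [OF H, of k'] subgroup.subset [OF H] by (blast intro: commutator_closed)
  then show ?thesis unfolding Suc lower_central_Suc_eq by (rule generate_is_subgroup)
qed (simp add: H)

lemma lower_central_conj_closed:
  assumes H: "subgroup H G" and g: "g \<in> H"
  shows "x \<in> lower_central G H k \<Longrightarrow> g \<otimes> x \<otimes> inv g \<in> lower_central G H k"
proof (induction k arbitrary: x)
  case 0
  then show ?case using H g by (simp add: subgroup.m_closed subgroup.m_inv_closed)
next
  case (Suc k)
  have HG: "H \<subseteq> carrier G" by (rule subgroup.subset [OF H])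
  let ?S = "{commutator G x y | x y. x \<in> lower_central G H k \<and> y \<in> H}"
  let ?K = "{h \<in> carrier G. g \<otimes> h \<otimes> inv g \<in> lower_central G H (Suc k)}"
  have "?S \<subseteq> ?K"
  proof
    fix s assume "s \<in> ?S"
    then obtain x y where s: "s = commutator G x y" "x \<in> lower_central G H k" "y \<in> H" by blast
    have "x \<in> carrier G" "y \<in> carrier G" "g \<in> carrier G"
      using s lower_central_subset [OF H] HG g by auto
    then have "g \<otimes> s \<otimes> inv g = commutator G (g \<otimes> x \<otimes> inv g) (g \<otimes> y \<otimes> inv g)"
      by (simp add: s(1) conj_commutator)
    moreover have "g \<otimes> y \<otimes> inv g \<in> H"
      using H g s(3) by (simp add: subgroup.m_closed subgroup.m_inv_closed)
    ultimately show "s \<in> ?K"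
      using Suc.IH [OF s(2)] commutator_mem_lower_central_Suc \<open>x \<in> carrier G\<close> \<open>y \<in> carrier G\<close> s(1)
      by auto
  qed
  then have "generate G ?S \<subseteq> ?K"
    by (rule generate_subgroup_incl [OF _ subgroup_conj_preimage [OF subgroup_lower_central [OF H]]])
      (use g HG in blast)
  then show ?case using Suc.prems unfolding lower_central_Suc_eq by blast
qed

lemma lower_central_antimono:
  assumes H: "subgroup H G" and "i \<le> j"
  shows "lower_central G H j \<subseteq> lower_central G H i"
proof (rule lift_Suc_antimono_le [OF _ \<open>i \<le> j\<close>])
  fix k show "lower_central G H (Suc k) \<subseteq> lower_central G H k"
  proof (induction k)
    case 0
    show ?case using lower_central_subset [OF H, of 1] by simp
  next
    case (Suc k)
    then have "{commutator G x y | x y. x \<in> lower_central G H (Suc k) \<and> y \<in> H}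
        \<subseteq> {commutator G x y | x y. x \<in> lower_central G H k \<and> y \<in> H}" by blast
    then show ?case unfolding lower_central_Suc_eq [of _ "Suc k"] lower_central_Suc_eq [of _ k]
      by (rule mono_generate)
  qed
qed

lemma commutator_lower_central_commutator:
  assumes H: "subgroup H G"
    and IH: "\<And>i a b. a \<in> lower_central G H i \<Longrightarrow> b \<in> lower_central G H j \<Longrightarrow>
               commutator G a b \<in> lower_central G H (i + j + 1)"
    and a: "a \<in> lower_central G H i" and x: "x \<in> lower_central G H j" and h: "h \<in> H"
  shows "commutator G a (commutator G x h) \<in> lower_central G H (i + j + 2)"
proof -
  let ?L = "lower_central G H" and ?N = "lower_central G H (Suc (Suc (i + j)))"
  have N: "subgroup ?N G" by (rule subgroup_lower_central [OF H])
  have inv_L: "y \<in> ?L k \<Longrightarrow> inv y \<in> ?L k" for y k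
    by (rule subgroup.m_inv_closed [OF subgroup_lower_central [OF H]])
  have aH: "a \<in> H" and xH: "x \<in> H" using a x lower_central_subset [OF H] by auto
  then have [simp]: "a \<in> carrier G" "x \<in> carrier G" "h \<in> carrier G"
    using h subgroup.subset [OF H] by auto
  \<comment> \<open>By Hall--Witt, \<open>[[x,h],a]\<close> is conjugate to \<open>(t2 t3)\<inverse>\<close>, and \<open>IH\<close> puts \<open>t2, t3\<close> in \<open>?N\<close>.\<close>
  define t2 where "t2 = a \<otimes> commutator G (commutator G (inv a) (inv x)) h \<otimes> inv a"
  define t3 where "t3 = h \<otimes> commutator G (commutator G (inv h) a) (inv x) \<otimes> inv h"
  have "commutator G (inv a) (inv x) \<in> ?L (i + j + 1)"
    by (rule IH [OF inv_L [OF a] inv_L [OF x]])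
  then have "commutator G (commutator G (inv a) (inv x)) h \<in> ?N"
    using commutator_mem_lower_central_Suc [OF _ h] by simp
  then have t2: "t2 \<in> ?N"
    unfolding t2_def by (rule lower_central_conj_closed [OF H aH])
  have "commutator G a (inv h) \<in> ?L (Suc i)"
    by (rule commutator_mem_lower_central_Suc [OF a subgroup.m_inv_closed [OF H h]])
  then have "commutator G (inv h) a \<in> ?L (Suc i)"
    using inv_L inv_commutator [of a "inv h"] by fastforce
  then have "commutator G (commutator G (inv h) a) (inv x) \<in> ?N"
    using IH [OF _ inv_L [OF x]] by fastforce
  then have t3: "t3 \<in> ?N"
    unfolding t3_def by (rule lower_central_conj_closed [OF H h])
  have [simp]: "t2 \<in> carrier G" "t3 \<in> carrier G"
    using t2 t3 subgroup.subset [OF N] by auto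
  have "(inv x \<otimes> commutator G (commutator G x h) a \<otimes> x) \<otimes> (t2 \<otimes> t3) = \<one>"
    using hall_witt [of x h a] by (simp add: t2_def t3_def m_assoc)
  then have "inv x \<otimes> commutator G (commutator G x h) a \<otimes> x = inv (t2 \<otimes> t3)"
    by (simp add: inv_equality [symmetric])
  then have "x \<otimes> inv (t2 \<otimes> t3) \<otimes> inv x
      = x \<otimes> (inv x \<otimes> commutator G (commutator G x h) a \<otimes> x) \<otimes> inv x"
    by simp
  also have "\<dots> = commutator G (commutator G x h) a"
    by (simp add: m_assoc)
  finally have "x \<otimes> inv (t2 \<otimes> t3) \<otimes> inv x = commutator G (commutator G x h) a" .
  moreover have "x \<otimes> inv (t2 \<otimes> t3) \<otimes> inv x \<in> ?N"
    by (intro lower_central_conj_closed [OF H xH] subgroup.m_inv_closed [OF N]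
        subgroup.m_closed [OF N] t2 t3)
  ultimately have "inv (commutator G (commutator G x h) a) \<in> ?N"
    by (simp add: subgroup.m_inv_closed [OF N])
  then show ?thesis by (simp add: inv_commutator)
qed

lemma lower_central_commutator:
  assumes H: "subgroup H G"
  shows "a \<in> lower_central G H i \<Longrightarrow> b \<in> lower_central G H j \<Longrightarrow>
    commutator G a b \<in> lower_central G H (i + j + 1)"
proof (induction j arbitrary: i a b)
  case 0
  then show ?case using commutator_mem_lower_central_Suc by simp
next
  case (Suc j)
  let ?S = "{commutator G x y | x y. x \<in> lower_central G H j \<and> y \<in> H}"
  let ?K = "{b \<in> H. \<forall>a \<in> lower_central G H i. commutator G a b \<in> lower_central G H (i + Suc j + 1)}"
  have K: "subgroup ?K G"
    using lower_central_subset [OF H, of i] subgroup.subset [OF H]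
    by (intro subgroup_commutator_preimage [OF H subgroup_lower_central [OF H]]
        lower_central_conj_closed [OF H]) auto
  have "?S \<subseteq> ?K"
  proof
    fix s assume "s \<in> ?S"
    then obtain x y where s: "s = commutator G x y" "x \<in> lower_central G H j" "y \<in> H" by blast
    then have "s \<in> H"
      using commutator_mem_lower_central_Suc lower_central_subset [OF H] by blast
    then show "s \<in> ?K"
      using commutator_lower_central_commutator [OF H Suc.IH _ s(2,3)] s(1) by simp
  qed
  then have "generate G ?S \<subseteq> ?K" by (rule generate_subgroup_incl [OF _ K])
  then show ?case using Suc.prems unfolding lower_central_Suc_eq by blast
qed

lemma derived_subset_lower_central:
  assumes H: "subgroup H G"
  shows "(derived G ^^ k) H \<subseteq> lower_central G H (2 ^ k - 1)"
proof (induction k)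
  case (Suc k)
  have "derived_set G ((derived G ^^ k) H) \<subseteq> lower_central G H (2 ^ Suc k - 1)"
  proof
    fix z assume "z \<in> derived_set G ((derived G ^^ k) H)"
    then obtain a b where "a \<in> lower_central G H (2 ^ k - 1)" "b \<in> lower_central G H (2 ^ k - 1)"
      and z: "z = commutator G a b"
      using Suc.IH by (auto simp: commutator_def)
    then have "z \<in> lower_central G H ((2 ^ k - 1) + (2 ^ k - 1) + 1)"
      using lower_central_commutator [OF H] by blast
    moreover have "(2 ^ k - 1) + (2 ^ k - 1) + 1 = (2 ^ Suc k - 1 :: nat)"
      using one_le_power [of "2 :: nat" k] by (simp only: power_Suc) linarith
    ultimately show "z \<in> lower_central G H (2 ^ Suc k - 1)" by simp
  qed
  then show ?case
    unfolding funpow.simps(2) comp_apply derived_def [of G "(derived G ^^ k) H"]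
    by (rule generate_subgroup_incl [OF _ subgroup_lower_central [OF H]])
qed simp

lemma derived_power_trivial_if_nilpotent_class_le:
  assumes H: "subgroup H G" and "nilpotent_class_le G H n" and "n < 2 ^ e"
  shows "(derived G ^^ e) H = {\<one>}"
proof -
  have "(derived G ^^ e) H \<subseteq> lower_central G H n"
    using derived_subset_lower_central [OF H, of e] lower_central_antimono [OF H, of n "2 ^ e - 1"]
      \<open>n < 2 ^ e\<close> by fastforce
  then show ?thesis
    using \<open>nilpotent_class_le G H n\<close> subgroup.one_closed [OF exp_of_derived_is_subgroup [OF H]]
    by (auto simp: nilpotent_class_le_def)
qed

lemma derived_series_antimono:
  assumes "subgroup H G" and "i \<le> j"
  shows "(derived G ^^ j) H \<subseteq> (derived G ^^ i) H"
  by (rule lift_Suc_antimono_le [of "\<lambda>k. (derived G ^^ k) H", OF _ assms(2)])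
    (simp add: derived_incl exp_of_derived_is_subgroup [OF assms(1)])

lemma derived_length_trivial:
  assumes "solvable G"
  shows "(derived G ^^ derived_length G) (carrier G) = {\<one>}"
  unfolding derived_length_def
  by (rule LeastI_ex) (use assms solvable_iff_trivial_derived_seq in blast)

lemma derived_series_nontrivial:
  "k < derived_length G \<Longrightarrow> (derived G ^^ k) (carrier G) \<noteq> {\<one>}"
  unfolding derived_length_def by (rule not_less_Least)

lemma derived_series_Suc_neq:
  assumes "solvable G" and "k < derived_length G"
  shows "(derived G ^^ Suc k) (carrier G) \<noteq> (derived G ^^ k) (carrier G)"
proof
  let ?D = "(derived G ^^ k) (carrier G)"
  assume "(derived G ^^ Suc k) (carrier G) = ?D"
  then have "(derived G ^^ l) ?D = ?D" for l by (induction l) simp_all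
  from this [of "derived_length G - k"] have "(derived G ^^ derived_length G) (carrier G) = ?D"
    using \<open>k < derived_length G\<close> by (metis funpow_add le_add_diff_inverse2 less_imp_le o_apply)
  then show False
    using derived_length_trivial [OF \<open>solvable G\<close>] derived_series_nontrivial [OF \<open>k < derived_length G\<close>]
    by simp
qed

lemma inj_on_derived_series:
  assumes "solvable G"
  shows "inj_on (\<lambda>k. (derived G ^^ k) (carrier G)) {..<derived_length G}"
proof -
  have "(derived G ^^ j) (carrier G) \<noteq> (derived G ^^ i) (carrier G)"
    if "i < j" "j < derived_length G" for i j
    using derived_series_antimono [OF subgroup_self, of "Suc i" j]
      derived_series_antimono [OF subgroup_self, of i "Suc i"]
      derived_series_Suc_neq [OF assms, of i] that by auto
  then show ?thesis
    by (intro inj_onI) (metis lessThan_iff linorder_neqE_nat)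
qed

lemma derived_series_not_nilpotent_class_le:
  assumes "solvable G" and "n < 2 ^ e" and "i + e < derived_length G"
  shows "\<not> nilpotent_class_le G ((derived G ^^ i) (carrier G)) n"
proof
  assume "nilpotent_class_le G ((derived G ^^ i) (carrier G)) n"
  then have "(derived G ^^ e) ((derived G ^^ i) (carrier G)) = {\<one>}"
    using derived_power_trivial_if_nilpotent_class_le
      [OF exp_of_derived_is_subgroup [OF subgroup_self] _ \<open>n < 2 ^ e\<close>] by blast
  then have "(derived G ^^ (e + i)) (carrier G) = {\<one>}" by (simp add: funpow_add)
  then show False
    using derived_series_nontrivial \<open>i + e < derived_length G\<close> by (simp add: add.commute)
qed

lemma derived_length_le_card_not_nilpotent_class_le:
  assumes "solvable G" and "n < 2 ^ e"
    and fin: "finite {H. subgroup H G \<and> \<not> nilpotent_class_le G H n}"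
  shows "derived_length G \<le> card {H. subgroup H G \<and> \<not> nilpotent_class_le G H n} + e"
proof -
  let ?D = "\<lambda>k. (derived G ^^ k) (carrier G)"
  have "?D ` {..<derived_length G - e} \<subseteq> {H. subgroup H G \<and> \<not> nilpotent_class_le G H n}"
    using derived_series_not_nilpotent_class_le [OF assms(1,2)]
      exp_of_derived_is_subgroup [OF subgroup_self] by auto
  from card_mono [OF fin this] have "card (?D ` {..<derived_length G - e})
      \<le> card {H. subgroup H G \<and> \<not> nilpotent_class_le G H n}" .
  moreover have "card (?D ` {..<derived_length G - e}) = derived_length G - e"
    using card_image [OF inj_on_subset [OF inj_on_derived_series [OF assms(1)]]] by simp
  ultimately show ?thesis by linarith
qed

end

text \<open>Since \<open>log 2 0 = 0\<close>, the case \<open>n = 0\<close> holds with \<open>k = 0\<close>.\<close>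

lemma floor_log2_nat_bound: "\<exists>k. \<lfloor>log 2 (real n)\<rfloor> = int k \<and> n < 2 ^ Suc k"
proof (cases "n = 0")
  case False
  then obtain k where "2 ^ k \<le> n" "n < 2 ^ (k + 1)"
    using ex_power_ivl1 [of 2 n] by auto
  then show ?thesis using floor_log_nat_eq_if [of 2 k n] by auto
qed (simp add: log_def)

theorem theoremB:
  fixes G :: "('a, 'b) monoid_scheme" and m n :: nat
  assumes "group G"
    and "solvable G"
    and "finite {H. subgroup H G \<and> \<not> nilpotent_class_le G H n}"
    and "card {H. subgroup H G \<and> \<not> nilpotent_class_le G H n} = m"
  shows "int (derived_length G) \<le> \<lfloor>log 2 (real n)\<rfloor> + int m + 1"
proof -
  obtain k where k: "\<lfloor>log 2 (real n)\<rfloor> = int k" "n < 2 ^ Suc k"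
    using floor_log2_nat_bound by blast
  have "derived_length G \<le> m + Suc k"
    using group.derived_length_le_card_not_nilpotent_class_le [OF assms(1,2) k(2) assms(3)] assms(4)
    by simp
  then show ?thesis using k(1) by linarith
qed

end
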